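(* Under the hypotheses of the arrival-bound lemma (all $\lambda_j>0$, $\min_j\lambda_j\Gamma\ge e^{2e}$, $|\sum_{i=1}^kU^j_i-\lambda_j^{-1}k|\le\Gamma\phi(k)$ for all $k\ge1$, $j$), let $P\in\{0,1\}^{J\times J}$ have row sums in $\{0,1\}$ and $P^N=0$ for some $N$, and set $\bar\lambda=(I-P^T)^{-1}\lambda$, $\bar A(t)=(I-P^T)^{-1}A(t)$. Then for every $t\ge\max_j\big(\lambda_j^{-1}e^e,\lambda_j^{-1}+3\lambda_j^{-1}\lambda_{\max}^2\Gamma^2\big)$ and every $j$, $$\phi(\bar A_j(t))\le\big(2+6\lambda_{\max}^2\Gamma^2\big)^{1/2}\phi(\bar\lambda_jt).$$
   Context: $\phi(x)=\sqrt{x\ln\ln x}$ for $x\ge e^e$, $\phi(x)=1$ otherwise. $A_j(t)=\max\{k\ge0:\sum_{i=1}^kU^j_i\le t\}$, $A(t)=(A_j(t))_j$, $\lambda=(\lambda_j)_j$, $\lambda_{\max}=\max_j\lambda_j$. *)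

theory Defs
  imports "HOL-Analysis.Analysis"
begin

definition phi :: "real \<Rightarrow> real" where
  "phi x = (if x \<ge> exp (exp 1) then sqrt (x * ln (ln x)) else 1)"

definition arrivals :: "('n \<Rightarrow> nat \<Rightarrow> real) \<Rightarrow> 'n \<Rightarrow> real \<Rightarrow> nat" where
  "arrivals U j t = (GREATEST k. (\<Sum>i=1..k. U j i) \<le> t)"

definition arrival_vec :: "('n::finite \<Rightarrow> nat \<Rightarrow> real) \<Rightarrow> real \<Rightarrow> real^'n" where
  "arrival_vec U t = (\<chi> j. real (arrivals U j t))"

fun matpow :: "'a::semiring_1^'n^'n \<Rightarrow> nat \<Rightarrow> 'a^'n^'n" where
  "matpow A 0 = mat 1"
| "matpow A (Suc n) = A ** matpow A n"

end

theory Submission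
  imports Defs
begin

(* Write a = sqrt (2 + 6 B^2) with B = lambda_max * Gamma and R = (I - P^T)^-1.
   The proof has three independent ingredients.
   (1) Analysis of phi: phi is monotone, and phi x <= a * phi y whenever
       x <= a * y with a >= 1 and y >= e^e.
   (2) A self-bounding argument: if x <= c + B * phi x with B >= 1,
       c >= e^e and c >= 1 + 3 B^2, then x <= a * c.  Applied to the index of
       the last arrival before t, the hypothesis on the partial sums of U gives
       A_i(t) <= a * lambda_i * t for every station i.
   (3) Linear algebra: since P is nilpotent, R is the finite Neumann sum
       I + P^T + ... + (P^T)^(N-1); it is entrywise nonnegative with diagonal
       entries at least 1.  Hence Abar_j(t) <= a * lambdabar_j * t and
       lambdabar_j >= lambda_j, so lambdabar_j * t >= e^e.
   The theorem follows by applying (1) to Abar_j(t) and lambdabar_j * t. *)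

section \<open>Elementary properties of phi\<close>

lemma exp_exp1_gt_one: "exp (exp 1) > (1::real)"
  by simp

lemma ln_ge_exp1:
  assumes "(y::real) \<ge> exp (exp 1)"
  shows "ln y \<ge> exp 1"
proof -
  have "y > 0" using less_le_trans[OF exp_gt_zero assms] .
  then have "ln (exp (exp 1)) \<le> ln y" using assms by (subst ln_le_cancel_iff) auto
  then show ?thesis by simp
qed

lemma lnln_ge_one:
  assumes "(y::real) \<ge> exp (exp 1)"
  shows "ln (ln y) \<ge> 1"
proof -
  have ly: "ln y \<ge> exp 1" using ln_ge_exp1[OF assms] .
  then have "ln (exp 1) \<le> ln (ln y)"
    using less_le_trans[OF exp_gt_zero ly] by (subst ln_le_cancel_iff) auto
  then show ?thesis by simp
qed

lemma phi_ge_one: "phi x \<ge> 1"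
proof (cases "x \<ge> exp (exp 1)")
  case True
  have "x \<ge> 1" using True exp_exp1_gt_one by linarith
  then have "1 * 1 \<le> x * ln (ln x)" using lnln_ge_one[OF True] by (intro mult_mono) auto
  then show ?thesis using True by (simp add: phi_def)
qed (simp add: phi_def)

lemma phi_mono:
  assumes xy: "x \<le> y"
  shows "phi x \<le> phi y"
proof (cases "x \<ge> exp (exp 1)")
  case False
  then show ?thesis using phi_ge_one[of y] by (simp add: phi_def)
next
  case x: True
  then have y: "y \<ge> exp (exp 1)" using xy by linarith
  have "0 < ln x" using ln_ge_exp1[OF x] exp_gt_zero[of 1] by linarith
  moreover have "ln x \<le> ln y" using xy less_le_trans[OF exp_gt_zero x] by simp
  ultimately have "ln (ln x) \<le> ln (ln y)" by simp
  moreover have "0 \<le> x" using x exp_exp1_gt_one by linarith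
  ultimately have "x * ln (ln x) \<le> y * ln (ln y)"
    using xy lnln_ge_one[OF x] by (intro mult_mono) auto
  then show ?thesis using x y by (simp add: phi_def)
qed

text \<open>Sublinear scaling: enlarging the argument by a factor a >= 1 enlarges
  phi by at most the factor a, because ln (ln (a y)) <= a ln (ln y).\<close>

lemma lnln_scale:
  fixes a y :: real
  assumes a: "a \<ge> 1" and y: "y \<ge> exp (exp 1)"
  shows "ln (ln (a * y)) \<le> a * ln (ln y)"
proof -
  define u where "u = ln y"
  have u1: "u \<ge> 1" using ln_ge_exp1[OF y] exp_ge_add_one_self[of 1] unfolding u_def by linarith
  have y0: "y > 0" using less_le_trans[OF exp_gt_zero y] .
  have la: "ln a \<ge> 0" using a by simp
  have "ln (a * y) = ln a + u" using a y0 unfolding u_def by (simp add: ln_mult)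
  also have "\<dots> \<le> u * (1 + ln a)" using mult_right_mono[OF u1 la] by (simp add: algebra_simps)
  finally have lay: "ln (a * y) \<le> u * (1 + ln a)" .
  have "ln (a * y) > 0" using la u1 \<open>ln (a * y) = ln a + u\<close> by linarith
  then have "ln (ln (a * y)) \<le> ln (u * (1 + ln a))" using lay by simp
  also have "\<dots> = ln u + ln (1 + ln a)" using u1 la by (simp add: ln_mult)
  also have "\<dots> \<le> ln u + (a - 1)"
    using ln_add_one_self_le_self[OF la] ln_le_minus_one[of a] a by simp
  also have "\<dots> \<le> ln u + (a - 1) * ln u"
    using mult_left_mono[OF lnln_ge_one[OF y], of "a - 1"] a unfolding u_def by simp
  also have "\<dots> = a * ln u" by (simp add: algebra_simps)
  finally show ?thesis unfolding u_def .
qed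

lemma phi_scale:
  fixes a x y :: real
  assumes a: "a \<ge> 1" and y: "y \<ge> exp (exp 1)" and x: "x \<le> a * y"
  shows "phi x \<le> a * phi y"
proof -
  have y1: "y \<ge> 1" using y exp_exp1_gt_one by linarith
  have ay: "a * y \<ge> exp (exp 1)" using y mult_right_mono[OF a, of y] y1 by linarith
  have "phi x \<le> phi (a * y)" using phi_mono[OF x] .
  also have "\<dots> = sqrt (a * y * ln (ln (a * y)))" using ay by (simp add: phi_def)
  also have "\<dots> \<le> sqrt (a * y * (a * ln (ln y)))"
    using lnln_scale[OF a y] a y1 by (intro real_sqrt_le_mono mult_left_mono) auto
  also have "\<dots> = sqrt (a^2 * (y * ln (ln y)))" by (simp add: power2_eq_square algebra_simps)
  also have "\<dots> = a * phi y" using a y by (simp add: phi_def real_sqrt_mult)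
  finally show ?thesis .
qed

section \<open>The self-bounding inequality\<close>

lemma exp_ge_cube:
  assumes "(y::real) \<ge> 0"
  shows "y^3 / 6 \<le> exp y"
proof -
  obtain s where "exp y = (\<Sum>m<4. y ^ m / fact m) + exp s / fact 4 * y ^ 4"
    using Maclaurin_exp_le[of y 4] by blast
  moreover have "(\<Sum>m<4. y ^ m / fact m) = 1 + y + y^2/2 + y^3/6"
    by (simp add: numeral_eq_Suc fact_numeral)
  moreover have "exp s / fact 4 * y ^ 4 \<ge> 0" by simp
  moreover have "1 + y + y^2/2 \<ge> 0" using assms by simp
  ultimately show ?thesis by linarith
qed

lemma ln_le_half:
  assumes "(y::real) > 0"
  shows "ln y \<le> y / 2"
proof -
  have "ln (y / 2) \<le> y / 2 - 1" using assms by (intro ln_le_minus_one) auto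
  moreover have "ln (y / 2) = ln y - ln 2" using assms by (simp add: ln_div)
  ultimately show ?thesis using ln_2_less_1 by linarith
qed

lemma lnln_cube_le:
  assumes "(x::real) > 1"
  shows "4/3 * ln (ln x) ^ 3 \<le> x"
proof -
  have lx: "ln x > 0" using assms by simp
  have "ln (ln x) ^ 3 \<le> (ln x / 2) ^ 3" by (rule power_mono_odd) (use ln_le_half[OF lx] in auto)
  also have "\<dots> = ln x ^ 3 / 8" by (simp add: power_divide)
  finally have "4/3 * ln (ln x) ^ 3 \<le> ln x ^ 3 / 6" by simp
  also have "\<dots> \<le> exp (ln x)" using exp_ge_cube lx by simp
  finally show ?thesis using assms by simp
qed

text \<open>The key estimate: a quantity bounded by c plus B times its own phi is at most
  sqrt (2 + 6 B^2) times c, provided c dominates e^e and 1 + 3 B^2.  If it were larger,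
  x would exceed both 2 c and 7 B^3, forcing x < 4 B^2 ln (ln x) and then
  x < 64/49 (ln (ln x))^3, contradicting the previous lemma.\<close>

lemma self_bounding:
  fixes B c x :: real
  assumes B1: "B \<ge> 1" and c_ee: "c \<ge> exp (exp 1)" and c_B: "c \<ge> 1 + 3 * B^2"
    and x: "x \<le> c + B * phi x"
  shows "x \<le> sqrt (2 + 6 * B^2) * c"
proof (rule ccontr)
  define a where "a = sqrt (2 + 6 * B^2)"
  assume "\<not> x \<le> sqrt (2 + 6 * B^2) * c"
  then have xa: "x > a * c" unfolding a_def by simp
  have c0: "c > 0" using c_B zero_le_power2[of B] by linarith
  have "B^2 \<ge> 1" using B1 by simp
  then have a2: "a \<ge> 2" unfolding a_def by (intro real_le_rsqrt) simp
  have a7: "a \<ge> 7/3 * B" unfolding a_def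
    by (rule real_le_rsqrt) (simp add: power2_eq_square)
  have x2c: "x > 2 * c" using xa mult_right_mono[OF a2 less_imp_le[OF c0]] by linarith
  then have x_ee: "x \<ge> exp (exp 1)" using c_ee c0 by simp
  define ll where "ll = ln (ln x)"
  have ll1: "ll \<ge> 1" unfolding ll_def using lnln_ge_one[OF x_ee] .
  have x1: "x > 1" using x_ee exp_exp1_gt_one by linarith
  have "x / 2 < B * sqrt (x * ll)" using x x2c x_ee by (simp add: phi_def ll_def)
  then have "(x / 2)^2 < (B * sqrt (x * ll))^2" using x1 by (intro power_strict_mono) auto
  also have "\<dots> = B^2 * (x * ll)" using x1 ll1 by (simp add: power_mult_distrib)
  finally have "x * x < x * (4 * B^2 * ll)" by (simp add: power2_eq_square algebra_simps)
  then have x_ll: "x < 4 * B^2 * ll" using x1 by simp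
  have "7 * B^3 \<le> a * c"
    using mult_mono[OF a7 c_B] B1 a2 by (simp add: power2_eq_square power3_eq_cube algebra_simps)
  then have "B^2 * (7 * B) < B^2 * (4 * ll)"
    using xa x_ll by (simp add: power2_eq_square power3_eq_cube algebra_simps)
  then have "B \<le> 4 * ll / 7" using B1 by simp
  then have "B^2 \<le> (4 * ll / 7)^2" using B1 by (intro power_mono) auto
  then have "4 * B^2 * ll \<le> 4 * (4 * ll / 7)^2 * ll" using ll1 by simp
  then have "x < 64/49 * ll^3" using x_ll by (simp add: power2_eq_square power3_eq_cube)
  moreover have "4/3 * ll^3 \<le> x" unfolding ll_def using lnln_cube_le[OF x1] .
  moreover have "ll^3 \<ge> 0" using ll1 by simp
  ultimately show False by linarith
qed

section \<open>Bound on the arrival counts of a single station\<close>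

text \<open>If the partial sums of the interarrival times stay within Gamma phi (k) of k / L,
  then every k whose partial sum fits into [0, t] satisfies k <= L t + L Gamma phi (k),
  and the self-bounding inequality applies.\<close>

lemma arrival_index_le:
  fixes L \<Gamma> B t :: real
  assumes L0: "L > 0" and LB: "L * \<Gamma> \<le> B" and B1: "B \<ge> 1"
    and t_ee: "L * t \<ge> exp (exp 1)" and t_B: "L * t \<ge> 1 + 3 * B^2"
    and U_bound: "\<forall>k::nat. k \<ge> 1 \<longrightarrow> \<bar>(\<Sum>m=1..k. u m) - real k / L\<bar> \<le> \<Gamma> * phi (real k)"
    and k: "(\<Sum>m=1..k. u m) \<le> t"
  shows "real k \<le> sqrt (2 + 6 * B^2) * (L * t)"
proof (cases "k = 0")
  case True
  have "L * t > 0" using t_ee exp_exp1_gt_one by linarith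
  then show ?thesis using True by simp
next
  case False
  have "\<bar>(\<Sum>m=1..k. u m) - real k / L\<bar> \<le> \<Gamma> * phi (real k)" using U_bound False by simp
  then have "real k / L \<le> t + \<Gamma> * phi (real k)" using k by linarith
  then have "real k \<le> L * t + (L * \<Gamma>) * phi (real k)"
    using L0 by (simp add: divide_le_eq algebra_simps)
  also have "\<dots> \<le> L * t + B * phi (real k)"
    using mult_right_mono[OF LB] phi_ge_one[of "real k"] by simp
  finally show ?thesis using self_bounding[OF B1 t_ee t_B] by blast
qed

text \<open>Since the admissible indices are bounded, the greatest one (the arrival count
  A_i(t)) exists and inherits the bound.\<close>

lemma arrivals_le:
  fixes L \<Gamma> B t :: real
  assumes L0: "L > 0" and LB: "L * \<Gamma> \<le> B" and B1: "B \<ge> 1"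
    and t_ee: "L * t \<ge> exp (exp 1)" and t_B: "L * t \<ge> 1 + 3 * B^2"
    and U_bound: "\<forall>k::nat. k \<ge> 1 \<longrightarrow> \<bar>(\<Sum>m=1..k. U i m) - real k / L\<bar> \<le> \<Gamma> * phi (real k)"
  shows "real (arrivals U i t) \<le> sqrt (2 + 6 * B^2) * (L * t)"
proof -
  define fits where "fits = (\<lambda>k. (\<Sum>m=1..k. U i m) \<le> t)"
  have bound: "real k \<le> sqrt (2 + 6 * B^2) * (L * t)" if "fits k" for k
    using arrival_index_le[OF L0 LB B1 t_ee t_B U_bound] that unfolding fits_def .
  have "L * t > 0" using t_ee exp_exp1_gt_one by linarith
  then have "t > 0" using L0 by (simp add: zero_less_mult_iff)
  then have "fits 0" unfolding fits_def by simp
  moreover have "y \<le> nat \<lceil>sqrt (2 + 6 * B^2) * (L * t)\<rceil>" if "fits y" for y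
    using bound[OF that] by linarith
  ultimately have "fits (Greatest fits)" by (rule GreatestI_nat)
  then show ?thesis using bound unfolding arrivals_def fits_def by blast
qed

section \<open>The resolvent of a nilpotent nonnegative matrix\<close>

lemma matpow_commute: "matpow A n ** A = A ** matpow A n"
proof (induction n)
  case (Suc n)
  have "matpow A (Suc n) ** A = A ** (matpow A n ** A)" by (simp add: matrix_mul_assoc)
  also have "\<dots> = A ** matpow A (Suc n)" using Suc by simp
  finally show ?case .
qed simp

lemma matpow_transpose:
  "matpow (transpose (A::'a::comm_semiring_1^'n^'n)) n = transpose (matpow A n)"
proof (induction n)
  case (Suc n)
  have "matpow (transpose A) (Suc n) = transpose A ** transpose (matpow A n)" using Suc by simp
  also have "\<dots> = transpose (matpow A n ** A)" by (simp add: matrix_transpose_mul)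
  also have "\<dots> = transpose (matpow A (Suc n))" by (simp add: matpow_commute)
  finally show ?case .
qed simp

lemma matpow_nonneg:
  assumes "\<forall>i l. (A::real^'n^'n) $ i $ l \<ge> 0"
  shows "matpow A n $ i $ l \<ge> 0"
proof (induction n arbitrary: i l)
  case 0
  then show ?case by (simp add: mat_def)
next
  case (Suc n)
  then show ?case using assms by (simp add: matrix_matrix_mult_def sum_nonneg)
qed

lemma matrix_diff_rdistrib: "((A::'a::ring_1^'n^'m) - B) ** C = A ** C - B ** C"
  by (vector matrix_matrix_mult_def sum_subtractf algebra_simps)

lemma neumann_telescope:
  "(mat 1 - (Q::'a::ring_1^'n^'n)) ** (\<Sum>n<N. matpow Q n) = mat 1 - matpow Q N"
proof (induction N)
  case (Suc N)
  have "(mat 1 - Q) ** (\<Sum>n<Suc N. matpow Q n)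
      = (mat 1 - Q) ** (\<Sum>n<N. matpow Q n) + (mat 1 - Q) ** matpow Q N"
    by (simp add: matrix_add_ldistrib)
  also have "\<dots> = mat 1 - matpow Q (Suc N)" using Suc by (simp add: matrix_diff_rdistrib)
  finally show ?case .
qed simp

lemma matrix_inv_eqI:
  fixes A S :: "real^'n^'n"
  assumes AS: "A ** S = mat 1"
  shows "matrix_inv A = S"
proof -
  have "S ** A = mat 1" using AS matrix_left_right_inverse by blast
  then have "\<exists>X. A ** X = mat 1 \<and> X ** A = mat 1" using AS by blast
  then have X: "A ** matrix_inv A = mat 1 \<and> matrix_inv A ** A = mat 1"
    unfolding matrix_inv_def by (rule someI_ex)
  have "matrix_inv A = matrix_inv A ** (A ** S)" using AS by simp
  also have "\<dots> = (matrix_inv A ** A) ** S" by (simp add: matrix_mul_assoc)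
  also have "\<dots> = S" using X by simp
  finally show ?thesis .
qed

lemma sum_matrix_component:
  "(\<Sum>n\<in>S. (f n :: 'a::semiring_1^'m^'n)) $ i $ l = (\<Sum>n\<in>S. f n $ i $ l)"
  by (induction S rule: infinite_finite_induct) auto

text \<open>For a nilpotent nonnegative Q, the resolvent (I - Q)^-1 is the finite sum of the
  powers of Q; hence it is nonnegative and dominates the identity entrywise.\<close>

lemma nilpotent_resolvent:
  fixes Q :: "real^'n^'n"
  assumes Q_nonneg: "\<forall>i l. Q $ i $ l \<ge> 0" and nilp: "matpow Q N = 0"
  shows "\<forall>i l. matrix_inv (mat 1 - Q) $ i $ l \<ge> 0"
    and "\<forall>i. matrix_inv (mat 1 - Q) $ i $ i \<ge> 1"
proof -
  have R: "matrix_inv (mat 1 - Q) = (\<Sum>n<N. matpow Q n)"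
    by (rule matrix_inv_eqI) (simp add: neumann_telescope nilp)
  show "\<forall>i l. matrix_inv (mat 1 - Q) $ i $ l \<ge> 0"
    unfolding R sum_matrix_component by (auto intro: sum_nonneg matpow_nonneg[OF Q_nonneg])
  have "matpow Q 0 $ i $ i \<le> (\<Sum>n<N. matpow Q n $ i $ i)" for i
  proof -
    have "N \<noteq> 0"
    proof
      assume "N = 0"
      then have "(mat 1 :: real^'n^'n) $ i $ i = 0" using nilp by simp
      then show False by (simp add: mat_def)
    qed
    then show ?thesis by (intro member_le_sum) (auto intro: matpow_nonneg[OF Q_nonneg])
  qed
  then show "\<forall>i. matrix_inv (mat 1 - Q) $ i $ i \<ge> 1"
    unfolding R sum_matrix_component by (simp add: mat_def)
qed

lemma nonneg_matrix_vector_le: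
  fixes R :: "real^'n^'m"
  assumes "\<forall>i l. R $ i $ l \<ge> 0" and "\<forall>i. x $ i \<le> c * y $ i"
  shows "(R *v x) $ j \<le> c * (R *v y) $ j"
proof -
  have "(R *v x) $ j = (\<Sum>i\<in>UNIV. R $ j $ i * x $ i)" by (simp add: matrix_vector_mult_def)
  also have "\<dots> \<le> (\<Sum>i\<in>UNIV. R $ j $ i * (c * y $ i))"
    using assms by (intro sum_mono mult_left_mono) auto
  also have "\<dots> = c * (R *v y) $ j"
    by (simp add: matrix_vector_mult_def sum_distrib_left algebra_simps)
  finally show ?thesis .
qed

lemma nonneg_matrix_vector_ge_diag:
  fixes R :: "real^'n^'n"
  assumes R_nonneg: "\<forall>i l. R $ i $ l \<ge> 0" and R_diag: "R $ j $ j \<ge> 1"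
    and y_nonneg: "\<forall>i. y $ i \<ge> 0"
  shows "y $ j \<le> (R *v y) $ j"
proof -
  have "y $ j \<le> R $ j $ j * y $ j" using mult_right_mono[OF R_diag y_nonneg[rule_format]] by simp
  also have "\<dots> \<le> (\<Sum>i\<in>UNIV. R $ j $ i * y $ i)"
    using R_nonneg y_nonneg by (intro member_le_sum) auto
  finally show ?thesis by (simp add: matrix_vector_mult_def)
qed

lemma routing_resolvent:
  fixes P :: "real^'n^'n"
  assumes P_01: "\<forall>i l. P $ i $ l = 0 \<or> P $ i $ l = 1" and nilp: "matpow P N = 0"
  shows "\<forall>i l. matrix_inv (mat 1 - transpose P) $ i $ l \<ge> 0"
    and "\<forall>i. matrix_inv (mat 1 - transpose P) $ i $ i \<ge> 1"
proof -
  have "matpow (transpose P) N = 0"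
    unfolding matpow_transpose nilp by (simp add: transpose_def vec_eq_iff)
  moreover have "\<forall>i l. transpose P $ i $ l \<ge> 0"
    using P_01 by (simp add: transpose_def) (metis order_refl zero_le_one)
  ultimately show "\<forall>i l. matrix_inv (mat 1 - transpose P) $ i $ l \<ge> 0"
    and "\<forall>i. matrix_inv (mat 1 - transpose P) $ i $ i \<ge> 1"
    using nilpotent_resolvent by blast+
qed

lemma rate_conditions:
  fixes lambda :: "real^'n::finite" and \<Gamma> t :: real
  assumes lam_pos: "\<forall>i. lambda $ i > 0"
    and lam_Gamma: "(MIN i. lambda $ i) * \<Gamma> \<ge> exp (2 * exp 1)"
    and t_ge: "\<forall>i. t \<ge> exp (exp 1) / lambda $ i
                 \<and> t \<ge> 1 / lambda $ i + 3 * (MAX l. lambda $ l)^2 * \<Gamma>^2 / lambda $ i"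
  shows "lambda $ i * \<Gamma> \<le> (MAX l. lambda $ l) * \<Gamma>"
    and "(MAX l. lambda $ l) * \<Gamma> \<ge> 1"
    and "lambda $ i * t \<ge> exp (exp 1)"
    and "lambda $ i * t \<ge> 1 + 3 * ((MAX l. lambda $ l) * \<Gamma>)^2"
    and "t > 0"
proof -
  define lmin where "lmin = (MIN i. lambda $ i)"
  have "lmin \<in> range (\<lambda>i. lambda $ i)" unfolding lmin_def by (rule Min_in) auto
  then obtain i0 where i0: "lmin = lambda $ i0" by auto
  have "exp (2 * exp 1) \<ge> (1::real)" by simp
  then have lG: "lmin * \<Gamma> \<ge> 1" using lam_Gamma unfolding lmin_def by linarith
  have "lmin > 0" using i0 lam_pos by simp
  have G0: "\<Gamma> > 0"
  proof (rule ccontr)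
    assume "\<not> \<Gamma> > 0"
    then have "lmin * \<Gamma> \<le> 0" using \<open>lmin > 0\<close> by (simp add: mult_nonneg_nonpos)
    then show False using lG by simp
  qed
  have le_max: "lambda $ l * \<Gamma> \<le> (MAX l. lambda $ l) * \<Gamma>" for l
    using G0 by (intro mult_right_mono) auto
  then show "lambda $ i * \<Gamma> \<le> (MAX l. lambda $ l) * \<Gamma>" .
  show "(MAX l. lambda $ l) * \<Gamma> \<ge> 1" using lG le_max[of i0] i0 by simp
  show "lambda $ i * t \<ge> exp (exp 1)" for i
    using t_ge lam_pos by (simp add: divide_le_eq mult.commute)
  then have "lambda $ i * t > 0" using exp_exp1_gt_one by (smt (verit))
  then show "t > 0" using lam_pos[rule_format, of i] by (simp add: zero_less_mult_iff)
  have "t \<ge> (1 + 3 * ((MAX l. lambda $ l) * \<Gamma>)^2) / lambda $ i"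
    using t_ge by (simp add: add_divide_distrib power_mult_distrib mult.assoc)
  then show "lambda $ i * t \<ge> 1 + 3 * ((MAX l. lambda $ l) * \<Gamma>)^2"
    using lam_pos by (simp add: divide_le_eq mult.commute)
qed

theorem mainTheorem8:
  fixes lambda :: "real^'n::finite"
    and U :: "'n \<Rightarrow> nat \<Rightarrow> real"
    and \<Gamma> :: real
    and P :: "real^'n^'n"
    and t :: real
    and j :: 'n
  assumes lam_pos: "\<forall>i. lambda $ i > 0"
    and lam_Gamma: "(MIN i. lambda $ i) * \<Gamma> \<ge> exp (2 * exp 1)"
    and U_bound: "\<forall>i. \<forall>k::nat. k \<ge> 1 \<longrightarrow>
                    \<bar>(\<Sum>m=1..k. U i m) - real k / lambda $ i\<bar> \<le> \<Gamma> * phi (real k)"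
    and P_01: "\<forall>i l. P $ i $ l = 0 \<or> P $ i $ l = 1"
    and P_rows: "\<forall>i. (\<Sum>l\<in>UNIV. P $ i $ l) = 0 \<or> (\<Sum>l\<in>UNIV. P $ i $ l) = 1"
    and P_nilp: "\<exists>N. matpow P N = 0"
    and t_ge: "\<forall>i. t \<ge> exp (exp 1) / lambda $ i
                 \<and> t \<ge> 1 / lambda $ i + 3 * (MAX l. lambda $ l)^2 * \<Gamma>^2 / lambda $ i"
  shows "phi ((matrix_inv (mat 1 - transpose P) *v arrival_vec U t) $ j)
         \<le> sqrt (2 + 6 * (MAX l. lambda $ l)^2 * \<Gamma>^2)
           * phi ((matrix_inv (mat 1 - transpose P) *v lambda) $ j * t)"
proof -
  define B where "B = (MAX l. lambda $ l) * \<Gamma>"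
  define a where "a = sqrt (2 + 6 * B^2)"
  define R where "R = matrix_inv (mat 1 - transpose P)"
  note rates = rate_conditions[OF lam_pos lam_Gamma t_ge, folded B_def]
  have a1: "a \<ge> 1" unfolding a_def by (rule real_le_rsqrt) (use rates(2) in simp)
  have "real (arrivals U i t) \<le> a * (lambda $ i * t)" for i
    unfolding a_def by (rule arrivals_le[OF lam_pos[rule_format] rates(1-4) spec[OF U_bound]])
  then have arr: "\<forall>i. arrival_vec U t $ i \<le> (a * t) * lambda $ i"
    by (simp add: arrival_vec_def algebra_simps)
  obtain N where "matpow P N = 0" using P_nilp by blast
  note R_facts = routing_resolvent[OF P_01 this, folded R_def]
  have "(R *v arrival_vec U t) $ j \<le> a * ((R *v lambda) $ j * t)"
    using nonneg_matrix_vector_le[OF R_facts(1) arr] by (simp add: algebra_simps)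
  moreover have "lambda $ j \<le> (R *v lambda) $ j"
    using nonneg_matrix_vector_ge_diag[OF R_facts(1) R_facts(2)[rule_format]] lam_pos
    by (simp add: less_imp_le)
  then have "(R *v lambda) $ j * t \<ge> exp (exp 1)"
    using mult_right_mono[of _ _ t] rates(3)[of j] rates(5) by (smt (verit))
  ultimately have "phi ((R *v arrival_vec U t) $ j) \<le> a * phi ((R *v lambda) $ j * t)"
    using phi_scale[OF a1] by blast
  then show ?thesis unfolding R_def a_def B_def by (simp add: power_mult_distrib mult.assoc)
qed

end
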